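(* Let $\alpha,\beta,\gamma\in\mathbb{Z}[i]$ satisfy $\alpha^2+i\beta^2+(1+i)\gamma^2=0$, $\alpha\beta\gamma\neq0$ and $\gcd(\alpha,\beta,\gamma)\in U$. Then $\alpha\beta\gamma\not\equiv0\pmod{1+i}$.
   Context: $\mathbb{Z}[i]$ is the ring of Gaussian integers, $U=\{1,-1,i,-i\}$ its unit group; $\gcd(\alpha,\beta,\gamma)\in U$ means no common non-unit divisor. *)

theory Defs
  imports Complex_Main
begin

definition gauss_ints :: "complex set" where
  "gauss_ints = {z. Re z \<in> \<int> \<and> Im z \<in> \<int>}"

definition gdvd :: "complex \<Rightarrow> complex \<Rightarrow> bool" where
  "gdvd d a \<longleftrightarrow> (\<exists>k\<in>gauss_ints. a = d * k)"

definition gauss_units :: "complex set" where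
  "gauss_units = {1, -1, \<i>, -\<i>}"

end

theory Submission
  imports Defs
begin

text \<open>Reduction modulo \<open>1 + \<i>\<close> sends \<open>x + y\<i>\<close> to the parity of \<open>x + y\<close>; this is a ring
  homomorphism onto \<open>\<int>/2\<close>, so \<open>1 + \<i>\<close> is prime. Reading the equation modulo 2 in real and
  imaginary parts, and using \<open>x\<^sup>2 - y\<^sup>2 \<equiv> x + y\<close> and \<open>2xy \<equiv> 0\<close>, shows that \<open>\<alpha>\<close>, \<open>\<beta>\<close>, \<open>\<gamma>\<close> all have
  the same residue. Hence if \<open>1 + \<i>\<close> divides the product it divides one factor, thus all three,
  contradicting the gcd condition.\<close>

lemma gauss_intsE:
  assumes "z \<in> gauss_ints"
  obtains x y :: int where "z = Complex (of_int x) (of_int y)"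
proof -
  from assms obtain x y where "Re z = of_int x" "Im z = of_int y"
    unfolding gauss_ints_def by (auto elim!: Ints_cases)
  then have "z = Complex (of_int x) (of_int y)" by (simp add: complex_eq_iff)
  then show ?thesis using that by blast
qed

lemma gdvd_one_plus_i_iff_even:
  "gdvd (1 + \<i>) (Complex (of_int x) (of_int y)) \<longleftrightarrow> even (x + y)"
proof
  assume "gdvd (1 + \<i>) (Complex (of_int x) (of_int y))"
  then obtain k where "k \<in> gauss_ints" and k: "Complex (of_int x) (of_int y) = (1 + \<i>) * k"
    unfolding gdvd_def by blast
  from \<open>k \<in> gauss_ints\<close> obtain u v where "k = Complex (of_int u) (of_int v)"
    by (rule gauss_intsE)
  with k have "x = u - v" "y = u + v"
    by (simp_all add: complex_eq_iff)
  then show "even (x + y)" by simp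
next
  assume "even (x + y)"
  then obtain t where t: "x + y = 2 * t" by (rule dvdE)
  have "Complex (of_int t) (of_int (t - x)) \<in> gauss_ints"
    unfolding gauss_ints_def by simp
  moreover have "Complex (of_int x) (of_int y) = (1 + \<i>) * Complex (of_int t) (of_int (t - x))"
    using t by (simp add: complex_eq_iff)
  ultimately show "gdvd (1 + \<i>) (Complex (of_int x) (of_int y))"
    unfolding gdvd_def by blast
qed

lemma gdvd_one_plus_i_mult:
  assumes "z \<in> gauss_ints" and "w \<in> gauss_ints"
  shows "gdvd (1 + \<i>) (z * w) \<longleftrightarrow> gdvd (1 + \<i>) z \<or> gdvd (1 + \<i>) w"
proof -
  obtain x y where z: "z = Complex (of_int x) (of_int y)" using assms(1) by (rule gauss_intsE)
  obtain u v where w: "w = Complex (of_int u) (of_int v)" using assms(2) by (rule gauss_intsE)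
  have "z * w = Complex (of_int (x * u - y * v)) (of_int (x * v + y * u))"
    by (simp add: z w complex_eq_iff)
  then have "gdvd (1 + \<i>) (z * w) \<longleftrightarrow> even ((x + y) * (u + v) - 2 * (y * v))"
    by (simp only: gdvd_one_plus_i_iff_even) (simp add: algebra_simps)
  then show ?thesis
    by (simp add: z w gdvd_one_plus_i_iff_even)
qed

lemma gauss_ints_one_plus_i: "1 + \<i> \<in> gauss_ints"
  by (simp add: gauss_ints_def)

lemma one_plus_i_not_gauss_unit: "1 + \<i> \<notin> gauss_units"
  by (auto simp: gauss_units_def complex_eq_iff)

lemma even_diff_squares_iff: "even (x\<^sup>2 - y\<^sup>2 :: int) \<longleftrightarrow> even (x + y)"
  by (simp add: power2_eq_square)

lemma gdvd_one_plus_i_congruent: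
  assumes "\<alpha> \<in> gauss_ints" and "\<beta> \<in> gauss_ints" and "\<gamma> \<in> gauss_ints"
    and "\<alpha>^2 + \<i> * \<beta>^2 + (1 + \<i>) * \<gamma>^2 = 0"
  shows "gdvd (1 + \<i>) \<alpha> \<longleftrightarrow> gdvd (1 + \<i>) \<gamma>"
    and "gdvd (1 + \<i>) \<beta> \<longleftrightarrow> gdvd (1 + \<i>) \<gamma>"
proof -
  obtain a b where \<alpha>: "\<alpha> = Complex (of_int a) (of_int b)" using assms(1) by (rule gauss_intsE)
  obtain c d where \<beta>: "\<beta> = Complex (of_int c) (of_int d)" using assms(2) by (rule gauss_intsE)
  obtain e f where \<gamma>: "\<gamma> = Complex (of_int e) (of_int f)" using assms(3) by (rule gauss_intsE)
  have "\<alpha>^2 + \<i> * \<beta>^2 + (1 + \<i>) * \<gamma>^2 = Complex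
      (of_int ((a\<^sup>2 - b\<^sup>2) + (e\<^sup>2 - f\<^sup>2) - 2 * (c * d + e * f)))
      (of_int ((c\<^sup>2 - d\<^sup>2) + (e\<^sup>2 - f\<^sup>2) + 2 * (a * b + e * f)))"
    by (simp add: \<alpha> \<beta> \<gamma> complex_eq_iff power2_eq_square algebra_simps)
  with assms(4) have "(a\<^sup>2 - b\<^sup>2) + (e\<^sup>2 - f\<^sup>2) = 2 * (c * d + e * f)"
    and "(c\<^sup>2 - d\<^sup>2) + (e\<^sup>2 - f\<^sup>2) = - 2 * (a * b + e * f)"
    by (simp_all add: complex_eq_iff del: of_int_diff of_int_add)
  then have "even (a + b) \<longleftrightarrow> even (e + f)" and "even (c + d) \<longleftrightarrow> even (e + f)"
    by (metis even_add even_diff_squares_iff dvd_triv_left mult_minus_left dvd_minus_iff)+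
  then show "gdvd (1 + \<i>) \<alpha> \<longleftrightarrow> gdvd (1 + \<i>) \<gamma>" and "gdvd (1 + \<i>) \<beta> \<longleftrightarrow> gdvd (1 + \<i>) \<gamma>"
    by (simp_all add: \<alpha> \<beta> \<gamma> gdvd_one_plus_i_iff_even)
qed

theorem lemma4p16:
  fixes \<alpha> \<beta> \<gamma> :: complex
  assumes "\<alpha> \<in> gauss_ints" and "\<beta> \<in> gauss_ints" and "\<gamma> \<in> gauss_ints"
    and "\<alpha>^2 + \<i> * \<beta>^2 + (1 + \<i>) * \<gamma>^2 = 0"
    and "\<alpha> * \<beta> * \<gamma> \<noteq> 0"
    and "\<forall>\<delta>\<in>gauss_ints. gdvd \<delta> \<alpha> \<and> gdvd \<delta> \<beta> \<and> gdvd \<delta> \<gamma> \<longrightarrow> \<delta> \<in> gauss_units"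
  shows "\<not> gdvd (1 + \<i>) (\<alpha> * \<beta> * \<gamma>)"
proof
  assume "gdvd (1 + \<i>) (\<alpha> * \<beta> * \<gamma>)"
  moreover have "\<alpha> * \<beta> \<in> gauss_ints"
    using assms(1,2) by (auto simp: gauss_ints_def)
  ultimately have "gdvd (1 + \<i>) \<alpha> \<or> gdvd (1 + \<i>) \<beta> \<or> gdvd (1 + \<i>) \<gamma>"
    using assms(1-3) by (simp add: gdvd_one_plus_i_mult)
  then have "gdvd (1 + \<i>) \<alpha> \<and> gdvd (1 + \<i>) \<beta> \<and> gdvd (1 + \<i>) \<gamma>"
    using gdvd_one_plus_i_congruent[OF assms(1-4)] by blast
  then show False
    using assms(6) gauss_ints_one_plus_i one_plus_i_not_gauss_unit by blast
qed

end
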